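(* Let $\tilde\sigma,\hat\sigma\in[0,1)$ and $(\tau,\theta)\in\mathcal R_{\tilde\sigma}$. Define $\varphi,\widehat\varphi,\widetilde\varphi,\overline\varphi:\mathbb{R}\to\mathbb{R}$ by $$\varphi(\sigma)=(1-\tau)(\sigma-1)+(1-\tau-\tilde\sigma)(\tau+\theta),\qquad \widehat\varphi(\sigma)=(1-\tau)[(1+\theta)\sigma-1+\tau]-\tilde\sigma(\tau+\theta),$$ $$\widetilde\varphi(\sigma)=\sigma-(1-\tau-\theta)^2-\tilde\sigma(\tau+\theta),\qquad \overline\varphi(\sigma)=[(1+\tau)\widehat\varphi(\sigma)-2\tau\varphi(\sigma)](1+\tau)\widetilde\varphi(\sigma)-(1-\theta)^2\varphi(\sigma)^2.$$ Then there exists $\sigma\in[\hat\sigma,1)$ such that $\varphi(\sigma)\ge0$, $\widehat\varphi(\sigma)\ge0$, $\widetilde\varphi(\sigma)>0$ and $\overline\varphi(\sigma)\ge0$.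
   Context: $\mathcal R_{\tilde\sigma}:=\{(\tau,\theta):\tau\in(-1,1-\tilde\sigma),\ \tau+\theta>0,\ (1-\tau^2)(2-\tau-\theta-\tilde\sigma)-(1-\theta)^2(1-\tau-\tilde\sigma)>0\}$. *)

theory Defs
  imports Complex_Main
begin

definition region_R :: "real \<Rightarrow> (real \<times> real) set" where
  "region_R s = {(\<tau>, \<theta>). -1 < \<tau> \<and> \<tau> < 1 - s \<and> \<tau> + \<theta> > 0 \<and>
     (1 - \<tau>\<^sup>2) * (2 - \<tau> - \<theta> - s) - (1 - \<theta>)\<^sup>2 * (1 - \<tau> - s) > 0}"

end

theory Submission
  imports Defs
begin

text \<open>At \<open>\<sigma> = 1\<close> the functions \<open>\<phi>\<close> and \<open>\<phi>hat\<close> both take the value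
  \<open>(1 - \<tau> - st) (\<tau> + \<theta>)\<close>, \<open>\<phi>tl\<close> takes the value \<open>(\<tau> + \<theta>) (2 - \<tau> - \<theta> - st)\<close>,
  and \<open>\<phi>bar 1\<close> factors as \<open>\<phi> 1 (\<tau> + \<theta>)\<close> times the polynomial whose positivity
  defines \<open>region_R st\<close>. All four values are positive on the region, so by continuity
  all four functions are positive on a left neighbourhood of \<open>1\<close>, which meets \<open>[sh, 1)\<close>.\<close>

lemma eventually_at_left_gt_of_isCont:
  fixes f :: "'a::linorder_topology \<Rightarrow> 'b::linorder_topology"
  assumes "isCont f a" "c < f a"
  shows "\<forall>\<^sub>F x in at_left a. c < f x"
proof -
  have "(f \<longlongrightarrow> f a) (at_left a)"
    using assms(1) by (auto simp: isCont_def intro: tendsto_mono[OF at_le])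
  then show ?thesis using assms(2) by (rule order_tendstoD(1))
qed

lemma eventually_at_left_obtain_real:
  fixes a b :: real
  assumes "\<forall>\<^sub>F x in at_left a. P x" "b < a"
  shows "\<exists>x. b < x \<and> x < a \<and> P x"
proof -
  have "\<forall>\<^sub>F x in at_left a. b < x \<and> x < a \<and> P x"
    using eventually_at_left_real[OF assms(2)] assms(1) by eventually_elim auto
  then show ?thesis using eventually_happens'[OF trivial_limit_at_left_real] by blast
qed

lemma region_R_pos:
  assumes "0 \<le> s" "(\<tau>, \<theta>) \<in> region_R s"
  shows "0 < 1 - \<tau> - s" "0 < \<tau> + \<theta>" "0 < 2 - \<tau> - \<theta> - s"
    and "0 < (1 - \<tau>\<^sup>2) * (2 - \<tau> - \<theta> - s) - (1 - \<theta>)\<^sup>2 * (1 - \<tau> - s)"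
proof -
  have R: "-1 < \<tau>" "\<tau> < 1 - s" "0 < \<tau> + \<theta>"
    and D: "0 < (1 - \<tau>\<^sup>2) * (2 - \<tau> - \<theta> - s) - (1 - \<theta>)\<^sup>2 * (1 - \<tau> - s)"
    using assms(2) by (auto simp: region_R_def)
  have "0 < 1 - \<tau>\<^sup>2"
    using R assms(1) by (simp add: abs_square_less_1)
  moreover have "0 < (1 - \<tau>\<^sup>2) * (2 - \<tau> - \<theta> - s)"
    using D R(2) by (smt (verit) zero_le_mult_iff zero_le_power2)
  ultimately show "0 < 2 - \<tau> - \<theta> - s" by (simp add: zero_less_mult_iff)
  show "0 < 1 - \<tau> - s" "0 < \<tau> + \<theta>" using R by simp_all
  show "0 < (1 - \<tau>\<^sup>2) * (2 - \<tau> - \<theta> - s) - (1 - \<theta>)\<^sup>2 * (1 - \<tau> - s)" by (fact D)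
qed

theorem proposition2p6:
  fixes st sh \<tau> \<theta> :: real
    and \<phi> \<phi>hat \<phi>tl \<phi>bar :: "real \<Rightarrow> real"
  assumes "0 \<le> st" "st < 1" "0 \<le> sh" "sh < 1"
    and "(\<tau>, \<theta>) \<in> region_R st"
    and "\<And>\<sigma>. \<phi> \<sigma> = (1 - \<tau>) * (\<sigma> - 1) + (1 - \<tau> - st) * (\<tau> + \<theta>)"
    and "\<And>\<sigma>. \<phi>hat \<sigma> = (1 - \<tau>) * ((1 + \<theta>) * \<sigma> - 1 + \<tau>) - st * (\<tau> + \<theta>)"
    and "\<And>\<sigma>. \<phi>tl \<sigma> = \<sigma> - (1 - \<tau> - \<theta>)\<^sup>2 - st * (\<tau> + \<theta>)"
    and "\<And>\<sigma>. \<phi>bar \<sigma> = ((1 + \<tau>) * \<phi>hat \<sigma> - 2 * \<tau> * \<phi> \<sigma>) * (1 + \<tau>) * \<phi>tl \<sigma>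
                         - (1 - \<theta>)\<^sup>2 * (\<phi> \<sigma>)\<^sup>2"
  shows "\<exists>\<sigma>. sh \<le> \<sigma> \<and> \<sigma> < 1 \<and> \<phi> \<sigma> \<ge> 0 \<and> \<phi>hat \<sigma> \<ge> 0 \<and> \<phi>tl \<sigma> > 0 \<and> \<phi>bar \<sigma> \<ge> 0"
proof -
  define A where "A = (1 - \<tau> - st) * (\<tau> + \<theta>)"
  define D where "D = (1 - \<tau>\<^sup>2) * (2 - \<tau> - \<theta> - st) - (1 - \<theta>)\<^sup>2 * (1 - \<tau> - st)"
  note pos = region_R_pos[OF assms(1,5), folded D_def]
  have at_one: "\<phi> 1 = A" "\<phi>hat 1 = A" "\<phi>tl 1 = (\<tau> + \<theta>) * (2 - \<tau> - \<theta> - st)"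
    by (simp_all add: assms(6-8) A_def power2_eq_square algebra_simps)
  have "\<phi>bar 1 = A * (\<tau> + \<theta>) * D"
    unfolding assms(9) at_one by (simp add: A_def D_def power2_eq_square algebra_simps)
  then have pos_at_one: "0 < \<phi> 1" "0 < \<phi>hat 1" "0 < \<phi>tl 1" "0 < \<phi>bar 1"
    using pos by (simp_all add: at_one A_def)
  have cont: "isCont \<phi> 1" "isCont \<phi>hat 1" "isCont \<phi>tl 1" "isCont \<phi>bar 1"
    unfolding assms(6-9)[abs_def] assms(6-8) by (auto intro!: continuous_intros)
  have "\<forall>\<^sub>F \<sigma> in at_left 1. 0 < \<phi> \<sigma> \<and> 0 < \<phi>hat \<sigma> \<and> 0 < \<phi>tl \<sigma> \<and> 0 < \<phi>bar \<sigma>"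
    using eventually_at_left_gt_of_isCont[OF cont(1) pos_at_one(1)]
      eventually_at_left_gt_of_isCont[OF cont(2) pos_at_one(2)]
      eventually_at_left_gt_of_isCont[OF cont(3) pos_at_one(3)]
      eventually_at_left_gt_of_isCont[OF cont(4) pos_at_one(4)]
    by eventually_elim auto
  from eventually_at_left_obtain_real[OF this assms(4)] show ?thesis
    by (auto intro: less_imp_le)
qed

end
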